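(* Let $c>0$ and $0<\varepsilon\le\delta<c/100$, and let $z\in\mathbb C$ satisfy $|\operatorname{Re}z|\ge c/\varepsilon$ and $|\operatorname{Im}z|\le\frac12$. Then for every integer $n\ge0$, $$\bigl|\ell^{(n)}_{c,\varepsilon}(z)\bigr|\le n!\,\frac{c\,e^{1.56\sqrt{\delta c}}}{\sinh c}\Bigl(\frac{2\varepsilon}{\delta}\Bigr)^n.$$
   Context: $\ell_c(x)=\frac{c}{\sinh c}\frac{\sin\sqrt{x^2-c^2}}{\sqrt{x^2-c^2}}$ is the Logan function, an entire function of $x\in\mathbb C$ (independent of the choice of square root), and $\ell_{c,\varepsilon}(x)=\ell_c(\varepsilon x)$; $\ell^{(n)}_{c,\varepsilon}$ denotes its $n$-th derivative. *)

theory Defs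
  imports "HOL-Analysis.Analysis"
begin

text \<open>sin(sqrt w)/sqrt w, extended continuously by 1 at w = 0 (entire in w,
independent of the choice of square root).\<close>
definition sinc_sqrt :: "complex \<Rightarrow> complex" where
  "sinc_sqrt w = (if w = 0 then 1 else sin (csqrt w) / csqrt w)"

definition logan :: "real \<Rightarrow> complex \<Rightarrow> complex" where
  "logan c x = complex_of_real (c / sinh c) * sinc_sqrt (x\<^sup>2 - (complex_of_real c)\<^sup>2)"

definition logan_eps :: "real \<Rightarrow> real \<Rightarrow> complex \<Rightarrow> complex" where
  "logan_eps c \<epsilon> x = logan c (complex_of_real \<epsilon> * x)"

end

theory Submission
  imports Defs "HOL-Complex_Analysis.Complex_Analysis"
begin

text \<open>The Logan function is entire, so Cauchy's inequality on the circle of radius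
\<open>\<delta>/(2\<epsilon>)\<close> around \<open>z\<close> bounds the \<open>n\<close>-th derivative by \<open>n! M (2\<epsilon>/\<delta>)\<^sup>n\<close>, where \<open>M\<close> bounds
\<open>\<ell>\<^sub>c\<^sub>,\<^sub>\<epsilon>\<close> on that circle. Since \<open>|sin s / s| \<le> e\<^bsup>|Im s|\<^esup>\<close>, it suffices to bound the imaginary
part of \<open>s = (u\<^sup>2 - c\<^sup>2)\<^bsup>1/2\<^esup>\<close> for \<open>u = \<epsilon>x\<close>. On the real rays \<open>|u| \<ge> c\<close> this square root is
real; the circle is mapped to within distance \<open>\<delta>\<close> of these rays, and there
\<open>|Im s|\<^sup>2 = (|u\<^sup>2 - c\<^sup>2| - Re (u\<^sup>2 - c\<^sup>2))/2 \<le> 2\<delta>c\<close>.\<close>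

lemma sin_odd_power_sums:
  fixes s :: complex
  shows "(\<lambda>k. (-1)^k / fact (2*k+1) * s^(2*k+1)) sums sin s"
proof -
  have "(\<lambda>n. sin_coeff n *\<^sub>R s^n) sums sin s"
    by (rule sin_converges)
  moreover have "strict_mono (\<lambda>k::nat. 2*k+1)"
    by (rule strict_monoI) simp
  moreover have "sin_coeff n *\<^sub>R s^n = 0" if "n \<notin> range (\<lambda>k::nat. 2*k+1)" for n
  proof -
    from that have "even n" by (metis oddE rangeI)
    then show ?thesis by (simp add: sin_coeff_def)
  qed
  ultimately have "(\<lambda>k. sin_coeff (2*k+1) *\<^sub>R s^(2*k+1)) sums sin s"
    using sums_mono_reindex[of "\<lambda>k::nat. 2*k+1" "\<lambda>n. sin_coeff n *\<^sub>R s^n"] by simp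
  then show ?thesis
    by (simp add: sin_coeff_def scaleR_conv_of_real)
qed

lemma sinc_sqrt_sums: "(\<lambda>k. (-1)^k / fact (2*k+1) * w^k) sums sinc_sqrt w"
proof (cases "w = 0")
  case True
  then show ?thesis
    using powser_sums_zero[of "\<lambda>k. (-1)^k / fact (2*k+1) :: complex"]
    by (simp add: sinc_sqrt_def)
next
  case False
  define s where "s = csqrt w"
  have "s \<noteq> 0" "w = s\<^sup>2"
    using False by (simp_all add: s_def)
  then have "(-1)^k / fact (2*k+1) * s^(2*k+1) / s = (-1)^k / fact (2*k+1) * w^k" for k
    by (simp add: power_mult)
  with sums_divide[OF sin_odd_power_sums, of s s]
  have "(\<lambda>k. (-1)^k / fact (2*k+1) * w^k) sums (sin s / s)"
    by simp
  with False show ?thesis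
    by (simp add: sinc_sqrt_def s_def)
qed

lemma sinc_sqrt_holomorphic: "sinc_sqrt holomorphic_on UNIV"
proof -
  let ?a = "\<lambda>k. (-1)^k / fact (2*k+1) :: complex"
  have summable: "summable (\<lambda>k. ?a k * w^k)" for w
    using sinc_sqrt_sums sums_summable by blast
  have "sinc_sqrt = (\<lambda>w. \<Sum>k. ?a k * w^k)"
    using sinc_sqrt_sums sums_unique by fastforce
  then have "sinc_sqrt field_differentiable at w" for w
    unfolding field_differentiable_def
    using termdiffs_strong_converges_everywhere[OF summable] by metis
  then show ?thesis
    by (simp add: holomorphic_on_def field_differentiable_at_within)
qed

lemma logan_eps_holomorphic: "logan_eps c \<epsilon> holomorphic_on UNIV"
proof -
  have "(\<lambda>x. (of_real \<epsilon> * x)\<^sup>2 - (of_real c)\<^sup>2) holomorphic_on UNIV"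
    by (auto intro!: holomorphic_intros)
  then have "(\<lambda>x. sinc_sqrt ((of_real \<epsilon> * x)\<^sup>2 - (of_real c)\<^sup>2)) holomorphic_on UNIV"
    using holomorphic_on_compose_gen[OF _ sinc_sqrt_holomorphic] by (auto simp: o_def)
  then show ?thesis
    unfolding logan_eps_def[abs_def] logan_def by (auto intro!: holomorphic_intros)
qed

lemma norm_cos_le_exp_abs_Im: "norm (cos z) \<le> exp \<bar>Im z\<bar>"
proof -
  have "norm (cos z) \<le> (norm (exp (\<i> * z)) + norm (exp (-(\<i> * z)))) / 2"
    unfolding cos_exp_eq
    by (metis divide_right_mono norm_divide norm_numeral norm_triangle_ineq zero_le_numeral)
  also have "\<dots> = (exp (- Im z) + exp (Im z)) / 2"
    by simp
  also have "\<dots> \<le> exp \<bar>Im z\<bar>"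
    by (cases "Im z \<ge> 0") auto
  finally show ?thesis .
qed

lemma norm_sin_le_exp_abs_Im: "norm (sin s) \<le> exp \<bar>Im s\<bar> * norm s"
proof -
  have "norm (sin s - sin 0) \<le> exp \<bar>Im s\<bar> * norm (s - 0)"
  proof (rule field_differentiable_bound[of "closed_segment 0 s" sin cos])
    show "(sin has_field_derivative cos z) (at z within closed_segment 0 s)" for z
      by (auto intro!: derivative_eq_intros)
    show "norm (cos z) \<le> exp \<bar>Im s\<bar>" if "z \<in> closed_segment 0 s" for z
    proof -
      from that obtain u where "0 \<le> u" "u \<le> 1" "z = u *\<^sub>R s"
        by (auto simp: closed_segment_def)
      then have "\<bar>Im z\<bar> \<le> \<bar>Im s\<bar>"
        by (simp add: abs_mult mult_left_le_one_le)
      then show ?thesis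
        using norm_cos_le_exp_abs_Im[of z] by (meson exp_le_cancel_iff order_trans)
    qed
  qed auto
  then show ?thesis
    by simp
qed

lemma norm_sinc_sqrt_le: "norm (sinc_sqrt w) \<le> exp \<bar>Im (csqrt w)\<bar>"
proof (cases "w = 0")
  case False
  then have "norm (csqrt w) > 0"
    by simp
  with False show ?thesis
    using norm_sin_le_exp_abs_Im[of "csqrt w"]
    by (simp add: sinc_sqrt_def norm_divide divide_le_eq)
qed (simp add: sinc_sqrt_def)

lemma abs_Im_csqrt: "\<bar>Im (csqrt w)\<bar> = sqrt ((cmod w - Re w) / 2)"
  using complex_Re_le_cmod[of w] by (cases "Im w = 0") (auto simp: abs_mult sgn_if)

lemma quartic_estimate:
  fixes A B c d :: real
  assumes A: "c\<^sup>2 - c * d \<le> A" and B: "0 \<le> B" "B \<le> d\<^sup>2" and dc: "d \<le> c" and d: "0 < d"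
  shows "4 * A * B \<le> 8 * d * c * (A - B - c\<^sup>2) + (4 * d * c)\<^sup>2"
proof -
  define P where "P = (A - (c\<^sup>2 - c * d)) * (8 * d * c - 4 * B)"
  define Q where "Q = 2 * d\<^sup>2 * c * c - B * (c + d) * c"
  \<comment> \<open>The slack is linear in \<open>A\<close> with slope \<open>8dc - 4B \<ge> 0\<close>; \<open>4Q\<close> is its value at \<open>A = c\<^sup>2 - cd\<close>.\<close>
  have "d * d \<le> d * c"
    using dc d by (simp add: mult_left_mono)
  with B have "4 * B \<le> 8 * d * c"
    using d unfolding power2_eq_square by linarith
  with A have "0 \<le> P"
    by (simp add: P_def)
  moreover have "0 \<le> Q"
  proof -
    have "B * (c + d) \<le> d\<^sup>2 * (2 * c)"
      using B dc d by (intro mult_mono) auto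
    then show ?thesis
      using d dc by (simp add: Q_def mult_right_mono)
  qed
  moreover have "8 * d * c * (A - B - c\<^sup>2) + (4 * d * c)\<^sup>2 = 4 * A * B + P + 4 * Q"
    by (simp add: P_def Q_def power2_eq_square algebra_simps)
  ultimately show ?thesis
    by linarith
qed

lemma cmod_minus_Re_le:
  fixes W :: complex and r :: real
  assumes "(Im W)\<^sup>2 \<le> 2 * r * Re W + r\<^sup>2" "0 \<le> Re W + r"
  shows "cmod W - Re W \<le> r"
proof -
  have "(Re W)\<^sup>2 + (Im W)\<^sup>2 \<le> (Re W + r)\<^sup>2"
    using assms(1) by (simp add: power2_eq_square algebra_simps)
  then have "cmod W \<le> Re W + r"
    unfolding cmod_def using assms(2) by (rule real_le_lsqrt[rotated])
  then show ?thesis by simp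
qed

lemma cmod_minus_Re_square_diff_le:
  fixes u :: complex and c d :: real
  assumes "0 < d" "d \<le> c" "c - d / 2 \<le> \<bar>Re u\<bar>" "\<bar>Im u\<bar> \<le> d"
  shows "cmod (u\<^sup>2 - (of_real c)\<^sup>2) - Re (u\<^sup>2 - (of_real c)\<^sup>2) \<le> 4 * d * c"
proof (rule cmod_minus_Re_le)
  have "0 \<le> c - d / 2"
    using assms(1,2) by simp
  have "c\<^sup>2 - c * d \<le> (c - d / 2)\<^sup>2"
    by (simp add: power2_eq_square algebra_simps)
  also have "\<dots> \<le> (Re u)\<^sup>2"
    using power_mono[OF assms(3) \<open>0 \<le> c - d / 2\<close>, of 2] by simp
  finally have A: "c\<^sup>2 - c * d \<le> (Re u)\<^sup>2" .
  have B: "(Im u)\<^sup>2 \<le> d\<^sup>2"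
    using power_mono[OF assms(4), of 2] by simp
  have Re: "Re (u\<^sup>2 - (of_real c)\<^sup>2) = (Re u)\<^sup>2 - (Im u)\<^sup>2 - c\<^sup>2"
    and Im: "(Im (u\<^sup>2 - (of_real c)\<^sup>2))\<^sup>2 = 4 * (Re u)\<^sup>2 * (Im u)\<^sup>2"
    by (simp_all add: power2_eq_square algebra_simps)
  show "(Im (u\<^sup>2 - (of_real c)\<^sup>2))\<^sup>2 \<le> 2 * (4 * d * c) * Re (u\<^sup>2 - (of_real c)\<^sup>2) + (4 * d * c)\<^sup>2"
    using quartic_estimate[OF A _ B assms(2,1)] unfolding Re Im by simp
  have "c * d + d\<^sup>2 \<le> 4 * d * c"
    using assms(1,2) by (simp add: power2_eq_square mult_left_mono)
  then show "0 \<le> Re (u\<^sup>2 - (of_real c)\<^sup>2) + 4 * d * c"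
    using A B unfolding Re by linarith
qed

lemma norm_logan_le:
  fixes u :: complex and c d :: real
  assumes "0 < d" "d \<le> c" "c - d / 2 \<le> \<bar>Re u\<bar>" "\<bar>Im u\<bar> \<le> d"
  shows "cmod (logan c u) \<le> c / sinh c * exp (1.56 * sqrt (d * c))"
proof -
  define W where "W = u\<^sup>2 - (of_real c)\<^sup>2"
  have "c > 0"
    using assms(1,2) by simp
  have "\<bar>Im (csqrt W)\<bar> = sqrt ((cmod W - Re W) / 2)"
    by (rule abs_Im_csqrt)
  also have "\<dots> \<le> sqrt (2 * (d * c))"
    using cmod_minus_Re_square_diff_le[OF assms] by (simp add: W_def)
  also have "\<dots> \<le> sqrt (1.56\<^sup>2 * (d * c))"
    using assms(1) \<open>c > 0\<close> by (intro real_sqrt_le_mono mult_right_mono) (auto simp: power2_eq_square)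
  also have "\<dots> = 1.56 * sqrt (d * c)"
    by (simp add: real_sqrt_mult)
  finally have "norm (sinc_sqrt W) \<le> exp (1.56 * sqrt (d * c))"
    using norm_sinc_sqrt_le[of W] by (meson exp_le_cancel_iff order_trans)
  moreover have "c / sinh c > 0"
    using \<open>c > 0\<close> by simp
  moreover have "cmod (logan c u) = c / sinh c * norm (sinc_sqrt W)"
    using \<open>c > 0\<close> by (simp add: logan_def W_def norm_mult del: of_real_divide)
  ultimately show ?thesis
    by (metis mult_left_mono less_imp_le)
qed

lemma scaled_ball_bounds:
  fixes c \<epsilon> \<delta> :: real and z x :: complex
  assumes "0 < \<epsilon>" "\<epsilon> \<le> \<delta>" "c / \<epsilon> \<le> \<bar>Re z\<bar>" "\<bar>Im z\<bar> \<le> 1/2"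
    and "cmod (z - x) \<le> \<delta> / (2 * \<epsilon>)"
  shows "c - \<delta> / 2 \<le> \<bar>Re (of_real \<epsilon> * x)\<bar>" and "\<bar>Im (of_real \<epsilon> * x)\<bar> \<le> \<delta>"
proof -
  have Re: "\<bar>Re z - Re x\<bar> \<le> \<delta> / (2 * \<epsilon>)" and Im: "\<bar>Im z - Im x\<bar> \<le> \<delta> / (2 * \<epsilon>)"
    using abs_Re_le_cmod[of "z - x"] abs_Im_le_cmod[of "z - x"] assms(5) by auto
  have "c - \<delta> / 2 \<le> \<epsilon> * (\<bar>Re z\<bar> - \<delta> / (2 * \<epsilon>))"
    using assms(1,3) by (simp add: right_diff_distrib pos_divide_le_eq mult.commute)
  also have "\<dots> \<le> \<epsilon> * \<bar>Re x\<bar>"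
    using Re assms(1) by (intro mult_left_mono) auto
  finally show "c - \<delta> / 2 \<le> \<bar>Re (of_real \<epsilon> * x)\<bar>"
    using assms(1) by (simp add: abs_mult)
  have "\<epsilon> * \<bar>Im x\<bar> \<le> \<epsilon> * (1/2 + \<delta> / (2 * \<epsilon>))"
    using Im assms(1,4) by (intro mult_left_mono) auto
  also have "\<dots> = \<epsilon> / 2 + \<delta> / 2"
    using assms(1) by (simp add: distrib_left)
  finally show "\<bar>Im (of_real \<epsilon> * x)\<bar> \<le> \<delta>"
    using assms(1,2) by (simp add: abs_mult)
qed

theorem lemma4:
  fixes c \<epsilon> \<delta> :: real and z :: complex and n :: nat
  assumes "c > 0" and "0 < \<epsilon>" and "\<epsilon> \<le> \<delta>" and "\<delta> < c / 100"
    and "\<bar>Re z\<bar> \<ge> c / \<epsilon>" and "\<bar>Im z\<bar> \<le> 1/2"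
  shows "cmod ((deriv ^^ n) (logan_eps c \<epsilon>) z)
           \<le> fact n * (c * exp (1.56 * sqrt (\<delta> * c)) / sinh c) * (2 * \<epsilon> / \<delta>) ^ n"
proof -
  define r where "r = \<delta> / (2 * \<epsilon>)"
  define M where "M = c / sinh c * exp (1.56 * sqrt (\<delta> * c))"
  have "cmod ((deriv ^^ n) (logan_eps c \<epsilon>) z) \<le> fact n * M / r ^ n"
  proof (rule Cauchy_inequality)
    show "logan_eps c \<epsilon> holomorphic_on ball z r"
      using logan_eps_holomorphic holomorphic_on_subset by blast
    show "continuous_on (cball z r) (logan_eps c \<epsilon>)"
      using logan_eps_holomorphic holomorphic_on_imp_continuous_on continuous_on_subset by blast
    show "0 < r"
      using assms(2,3) by (simp add: r_def)
    show "norm (logan_eps c \<epsilon> x) \<le> M" if "norm (z - x) = r" for x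
      using norm_logan_le[OF _ _ scaled_ball_bounds[OF assms(2,3,5,6)]] assms(1-4) that
      by (simp add: logan_eps_def M_def r_def)
  qed
  also have "\<dots> = fact n * (c * exp (1.56 * sqrt (\<delta> * c)) / sinh c) * (2 * \<epsilon> / \<delta>) ^ n"
    using assms(2,3) by (simp add: r_def M_def field_simps)
  finally show ?thesis .
qed

end
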